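(* Let $G(V)$ be a network, $\varepsilon>0$, $S\subseteq V$, and $S=B_1\cup\dots\cup B_m$ a partition with $m\ge2$ such that (1) for all $i$ and all $x,y\in B_i$, $R_{\mathrm{eff}}(x,y)\le\varepsilon/48$; and (2) for all $i\ne j$, $x\in B_i$, $y\in B_j$, $R_{\mathrm{eff}}(x,y)\ge\varepsilon$. Then there is $I\subseteq\{1,\dots,m\}$ with $|I|\ge m/2$ such that $R_{\mathrm{eff}}(B_i,S\setminus B_i)\ge\varepsilon/24$ for all $i\in I$.
   Context: A network is a finite connected graph $G=(V,E)$ with symmetric conductances $c_{xy}\ge0$, $c_{xy}>0$ iff $xy\in E$; $R_{\mathrm{eff}}$ is effective resistance. For disjoint nonempty $S,T\subseteq V$, $R_{\mathrm{eff}}(S,T)$ is the effective resistance between the two vertices obtained by identifying (gluing) all vertices of $S$ into a single vertex and all vertices of $T$ into a single vertex, where the conductance between a glued vertex and another vertex $x$ is the sum of the conductances from $x$ to the glued set (and similarly between the two glued vertices); for $v\in V$, $R_{\mathrm{eff}}(v,S)=R_{\mathrm{eff}}(\{v\},S)$. *)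

theory Defs
  imports Complex_Main
begin

definition network :: "'a set \<Rightarrow> ('a \<Rightarrow> 'a \<Rightarrow> real) \<Rightarrow> bool" where
  "network V c \<longleftrightarrow> finite V \<and> V \<noteq> {} \<and>
     (\<forall>x y. 0 \<le> c x y) \<and> (\<forall>x y. c x y = c y x) \<and>
     (\<forall>x y. 0 < c x y \<longrightarrow> x \<in> V \<and> y \<in> V) \<and> (\<forall>x. c x x = 0) \<and>
     (\<forall>x\<in>V. \<forall>y\<in>V. (x, y) \<in> {(u, v). 0 < c u v}\<^sup>*)"

text \<open>Dirichlet energy of a function on the vertices (each edge counted once).\<close>
definition energy :: "'a set \<Rightarrow> ('a \<Rightarrow> 'a \<Rightarrow> real) \<Rightarrow> ('a \<Rightarrow> real) \<Rightarrow> real" where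
  "energy W C f = (\<Sum>u\<in>W. \<Sum>v\<in>W. C u v * (f u - f v)^2) / 2"

text \<open>Effective resistance between two vertices: reciprocal of the effective
conductance, i.e. the minimal energy of a unit potential (Dirichlet principle);
R_eff(a,a) = 0.\<close>
definition reff :: "'a set \<Rightarrow> ('a \<Rightarrow> 'a \<Rightarrow> real) \<Rightarrow> 'a \<Rightarrow> 'a \<Rightarrow> real" where
  "reff W C a b = (if a = b then 0 else
      1 / Inf {energy W C f | f. f a = 1 \<and> f b = 0})"

text \<open>Gluing S and T: the vertices of the glued network are S, T and the
singletons of the remaining vertices; the conductance between two distinct
glued vertices is the sum of conductances between their members.\<close>
definition glued_vertices :: "'a set \<Rightarrow> 'a set \<Rightarrow> 'a set \<Rightarrow> 'a set set" where
  "glued_vertices V S T = {S, T} \<union> {{x} | x. x \<in> V - (S \<union> T)}"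

definition glued_cond :: "('a \<Rightarrow> 'a \<Rightarrow> real) \<Rightarrow> 'a set \<Rightarrow> 'a set \<Rightarrow> real" where
  "glued_cond c P Q = (if P = Q then 0 else (\<Sum>x\<in>P. \<Sum>y\<in>Q. c x y))"

definition reff_set :: "'a set \<Rightarrow> ('a \<Rightarrow> 'a \<Rightarrow> real) \<Rightarrow> 'a set \<Rightarrow> 'a set \<Rightarrow> real" where
  "reff_set V c S T = reff (glued_vertices V S T) (glued_cond c) S T"

end

theory Submission
  imports Defs "HOL-Analysis.Analysis"
begin

(*
  Let U_i be the harmonic measure of the block B_i relative to S
  (potential 1 on B_i, 0 on the other blocks, energy-minimising elsewhere); its
  energy C_i is the reciprocal of R_eff(B_i, S - B_i).  The currents of U_i
  summed over the blocks form a symmetric matrix F with zero row sums, diagonal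
  C_i and nonpositive off-diagonal entries.  Fix a vertex r and unit-current
  potentials Psi_i from a representative x_i of B_i to r.  Since the potentials of
  unit currents are 1-Lipschitz for R_eff and the blocks have diameter at most
  eps/48, pairing U_i with Psi_i (which gives at most 1) is the sum over k of
  F_ik Psi_i(x_k) up to an error eps/24 C_i.  The second differences of the
  values Psi_i(x_k) are voltage drops between representatives, hence at least eps.
  Together (11/12) eps (sum_i C_i) <= 2m, so by Markov's inequality at most m/11
  blocks have C_i > 24/eps, and all others have R_eff(B_i, S - B_i) >= eps/24.
*)

section \<open>Dirichlet form, Laplacian and Green's identity\<close>

text \<open>The Laplacian of a potential f at z is the net current flowing out of z.\<close>
definition laplacian :: "'a set \<Rightarrow> ('a \<Rightarrow> 'a \<Rightarrow> real) \<Rightarrow> ('a \<Rightarrow> real) \<Rightarrow> 'a \<Rightarrow> real" where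
  "laplacian V c f z = (\<Sum>v\<in>V. c z v * (f z - f v))"

definition dirichlet_form ::
  "'a set \<Rightarrow> ('a \<Rightarrow> 'a \<Rightarrow> real) \<Rightarrow> ('a \<Rightarrow> real) \<Rightarrow> ('a \<Rightarrow> real) \<Rightarrow> real" where
  "dirichlet_form V c f g = (\<Sum>u\<in>V. \<Sum>v\<in>V. c u v * (f u - f v) * (g u - g v)) / 2"

lemma energy_eq_dirichlet_form: "energy V c f = dirichlet_form V c f f"
  unfolding energy_def dirichlet_form_def by (simp add: power2_eq_square mult.assoc)

lemma dirichlet_form_commute: "dirichlet_form V c f g = dirichlet_form V c g f"
  unfolding dirichlet_form_def by (simp add: algebra_simps)

lemma dirichlet_form_green:
  assumes sym: "\<forall>x y. c x y = c y x"
  shows "dirichlet_form V c f g = (\<Sum>u\<in>V. g u * laplacian V c f u)"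
proof -
  define a where "a u v = c u v * (f u - f v)" for u v
  have antisym: "a u v = - a v u" for u v
    using sym unfolding a_def by (simp add: algebra_simps)
  have "(\<Sum>u\<in>V. \<Sum>v\<in>V. a u v * g v) = (\<Sum>v\<in>V. \<Sum>u\<in>V. a u v * g v)"
    by (rule sum.swap)
  also have "\<dots> = (\<Sum>v\<in>V. \<Sum>u\<in>V. - (a v u * g v))"
    by (intro sum.cong refl) (subst antisym, simp)
  finally have swap: "(\<Sum>u\<in>V. \<Sum>v\<in>V. a u v * g v) = - (\<Sum>u\<in>V. \<Sum>v\<in>V. a u v * g u)"
    by (simp add: sum_negf)
  have "(\<Sum>u\<in>V. \<Sum>v\<in>V. a u v * (g u - g v))
      = (\<Sum>u\<in>V. \<Sum>v\<in>V. a u v * g u) - (\<Sum>u\<in>V. \<Sum>v\<in>V. a u v * g v)"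
    by (simp add: right_diff_distrib sum_subtractf)
  also have "\<dots> = 2 * (\<Sum>u\<in>V. \<Sum>v\<in>V. a u v * g u)"
    unfolding swap by simp
  also have "\<dots> = 2 * (\<Sum>u\<in>V. g u * laplacian V c f u)"
    unfolding laplacian_def a_def by (simp add: sum_distrib_left mult.commute)
  finally show ?thesis
    unfolding dirichlet_form_def a_def by (simp add: mult.assoc)
qed

lemma laplacian_sum_zero:
  assumes sym: "\<forall>x y. c x y = c y x"
  shows "(\<Sum>u\<in>V. laplacian V c f u) = 0"
  using dirichlet_form_green[OF sym, of V f "\<lambda>_. 1"] by (simp add: dirichlet_form_def)

lemma laplacian_diff: "laplacian V c (\<lambda>z. f z - g z) z = laplacian V c f z - laplacian V c g z"
  unfolding laplacian_def by (simp add: sum_subtractf[symmetric] algebra_simps)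

lemma energy_perturb:
  "energy V c (\<lambda>z. f z + t * h z)
     = energy V c f + 2 * t * dirichlet_form V c f h + t\<^sup>2 * energy V c h"
proof -
  have "(\<Sum>u\<in>V. \<Sum>v\<in>V. c u v * ((f u + t * h u) - (f v + t * h v))\<^sup>2) =
     (\<Sum>u\<in>V. \<Sum>v\<in>V. c u v * (f u - f v)\<^sup>2 + 2 * t * (c u v * (f u - f v) * (h u - h v))
        + t\<^sup>2 * (c u v * (h u - h v)\<^sup>2))"
    by (intro sum.cong refl) (simp add: power2_eq_square algebra_simps)
  also have "\<dots> = (\<Sum>u\<in>V. \<Sum>v\<in>V. c u v * (f u - f v)\<^sup>2)
      + 2 * t * (\<Sum>u\<in>V. \<Sum>v\<in>V. c u v * (f u - f v) * (h u - h v))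
      + t\<^sup>2 * (\<Sum>u\<in>V. \<Sum>v\<in>V. c u v * (h u - h v)\<^sup>2)"
    by (simp add: sum.distrib sum_distrib_left)
  finally show ?thesis
    unfolding energy_def dirichlet_form_def by (simp add: algebra_simps add_divide_distrib)
qed

lemma energy_nonneg: "\<forall>x y. 0 \<le> c x y \<Longrightarrow> 0 \<le> energy V c f"
  unfolding energy_def by (intro divide_nonneg_pos sum_nonneg mult_nonneg_nonneg) auto

lemma energy_cong: "(\<And>z. z \<in> V \<Longrightarrow> f z = g z) \<Longrightarrow> energy V c f = energy V c g"
  unfolding energy_def by (intro arg_cong[where f="\<lambda>x. x / 2"] sum.cong refl) auto

text \<open>First variation: if u has minimal energy along the line u + t h, then u is
  orthogonal to h.  (Otherwise t = -a/(b+1) strictly decreases the energy.)\<close>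
lemma dirichlet_form_zero_at_minimum:
  assumes min: "\<And>t. energy V c u \<le> energy V c (\<lambda>z. u z + t * h z)"
    and nonneg: "\<forall>x y. 0 \<le> c x y"
  shows "dirichlet_form V c u h = 0"
proof (rule ccontr)
  define a where "a = dirichlet_form V c u h"
  define b where "b = energy V c h"
  define t where "t = - a / (b + 1)"
  assume "dirichlet_form V c u h \<noteq> 0"
  then have "a \<noteq> 0" unfolding a_def .
  have b: "0 \<le> b" unfolding b_def by (rule energy_nonneg[OF nonneg])
  have "0 \<le> 2 * t * a + t\<^sup>2 * b"
    using min[of t] unfolding energy_perturb a_def b_def by simp
  have tb: "t * (b + 1) = - a" using b unfolding t_def by simp
  have "(2 * t * a + t\<^sup>2 * b) * (b + 1)\<^sup>2
      = 2 * a * (t * (b + 1)) * (b + 1) + (t * (b + 1))\<^sup>2 * b"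
    by (simp add: power2_eq_square algebra_simps)
  also have "\<dots> = - a\<^sup>2 * (b + 2)"
    unfolding tb by (simp add: power2_eq_square algebra_simps)
  finally have "(2 * t * a + t\<^sup>2 * b) * (b + 1)\<^sup>2 = - a\<^sup>2 * (b + 2)" .
  moreover have "- a\<^sup>2 * (b + 2) < 0" using \<open>a \<noteq> 0\<close> b by simp
  ultimately show False using \<open>0 \<le> 2 * t * a + t\<^sup>2 * b\<close>
    by (metis mult_nonneg_nonneg not_less zero_le_power2)
qed

section \<open>Networks: connectivity and existence of energy minimisers\<close>

lemma network_facts:
  assumes "network V c"
  shows "finite V" "V \<noteq> {}" "\<forall>x y. 0 \<le> c x y" "\<forall>x y. c x y = c y x"
    "\<forall>x y. 0 < c x y \<longrightarrow> x \<in> V \<and> y \<in> V"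
    "\<forall>x\<in>V. \<forall>y\<in>V. (x, y) \<in> {(u, v). 0 < c u v}\<^sup>*"
  using assms unfolding network_def by blast+

text \<open>On a connected network only constant potentials have zero energy: every
  edge term vanishes, so f is constant along edges, hence along paths.\<close>
lemma energy_zero_imp_const:
  assumes net: "network V c" and zero: "energy V c f = 0" and x: "x \<in> V" and y: "y \<in> V"
  shows "f x = f y"
proof -
  note nf = network_facts[OF net]
  have terms_nonneg: "0 \<le> c u v * (f u - f v)\<^sup>2" for u v
    using nf(3) by simp
  have "(\<Sum>u\<in>V. \<Sum>v\<in>V. c u v * (f u - f v)\<^sup>2) = 0"
    using zero unfolding energy_def by simp
  then have terms_zero: "c u v * (f u - f v)\<^sup>2 = 0" if "u \<in> V" "v \<in> V" for u v
    using that nf(1) terms_nonneg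
    by (simp add: sum_nonneg sum_nonneg_eq_0_iff)
  have along_edge: "f u = f v" if "0 < c u v" for u v
    using terms_zero[of u v] nf(5) that by auto
  have "(x, y) \<in> {(u, v). 0 < c u v}\<^sup>*" using nf(6) x y by blast
  then show ?thesis
    by (induction rule: rtrancl_induct) (auto dest: along_edge)
qed

lemma compact_PiE_real:
  fixes S :: "'a \<Rightarrow> real set"
  assumes "\<And>i. compact (S i)"
  shows "compact (Pi\<^sub>E UNIV S)"
proof -
  have "compactin (product_topology (\<lambda>_. euclidean) UNIV) (Pi\<^sub>E UNIV S)"
    using assms by (simp add: compactin_PiE)
  then show ?thesis by (simp add: euclidean_product_topology)
qed

lemma energy_continuous: "continuous_on UNIV (\<lambda>f :: 'a \<Rightarrow> real. energy V c f)"
  unfolding energy_def by (intro continuous_intros continuous_on_product_coordinates) auto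

text \<open>Truncating a potential to [0,1] is a contraction on every edge, so it does
  not increase the energy.\<close>
lemma energy_truncate:
  assumes "\<forall>x y. 0 \<le> c x y"
  shows "energy V c (\<lambda>z. max 0 (min 1 (f z))) \<le> energy V c f"
  unfolding energy_def
proof (intro divide_right_mono sum_mono mult_left_mono)
  fix u v
  have "\<bar>max 0 (min 1 (f u)) - max 0 (min 1 (f v))\<bar>\<^sup>2 \<le> \<bar>f u - f v\<bar>\<^sup>2"
    by (intro power_mono) auto
  then show "(max 0 (min 1 (f u)) - max 0 (min 1 (f v)))\<^sup>2 \<le> (f u - f v)\<^sup>2" by simp
qed (use assms in auto)

definition dirichlet_min :: "'a set \<Rightarrow> ('a \<Rightarrow> 'a \<Rightarrow> real) \<Rightarrow> 'a set \<Rightarrow> ('a \<Rightarrow> real) \<Rightarrow> bool" where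
  "dirichlet_min V c D u \<longleftrightarrow> (\<forall>f. (\<forall>z\<in>D. f z = u z) \<longrightarrow> energy V c u \<le> energy V c f)"

lemma dirichlet_minD:
  "dirichlet_min V c D u \<Longrightarrow> (\<And>z. z \<in> D \<Longrightarrow> f z = u z) \<Longrightarrow> energy V c u \<le> energy V c f"
  unfolding dirichlet_min_def by blast

text \<open>Existence for boundary data in [0,1]: minimise the continuous energy over the
  compact set of potentials with the given boundary values and range [0,1];
  by truncation this is also minimal among all potentials.\<close>
lemma dirichlet_min_exists:
  assumes net: "network V c" and d: "\<forall>z\<in>D. 0 \<le> d z \<and> d z \<le> 1"
  obtains u where "\<forall>z\<in>D. u z = d z" "\<forall>z. 0 \<le> u z \<and> u z \<le> 1" "dirichlet_min V c D u"
proof -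
  define R where "R z = (if z \<in> D then {d z} else {0..(1::real)})" for z
  define Adm where "Adm = Pi\<^sub>E UNIV R"
  have "compact Adm" unfolding Adm_def by (rule compact_PiE_real) (auto simp: R_def)
  moreover have "(\<lambda>z. if z \<in> D then d z else 0) \<in> Adm" unfolding Adm_def R_def by auto
  ultimately obtain u where u: "u \<in> Adm" and umin: "\<forall>f\<in>Adm. energy V c u \<le> energy V c f"
    using continuous_attains_inf[OF _ _ continuous_on_subset[OF energy_continuous]] by blast
  have uR: "u z \<in> R z" for z using u unfolding Adm_def by auto
  have boundary: "\<forall>z\<in>D. u z = d z"
    using uR unfolding R_def by (metis singletonD)
  have range: "\<forall>z. 0 \<le> u z \<and> u z \<le> 1"
  proof
    fix z show "0 \<le> u z \<and> u z \<le> 1"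
      using uR[of z] d boundary unfolding R_def by (cases "z \<in> D") auto
  qed
  have "dirichlet_min V c D u"
    unfolding dirichlet_min_def
  proof (intro allI impI)
    fix f assume "\<forall>z\<in>D. f z = u z"
    then have "(\<lambda>z. max 0 (min 1 (f z))) \<in> Adm"
      using boundary d unfolding Adm_def R_def by auto
    then have "energy V c u \<le> energy V c (\<lambda>z. max 0 (min 1 (f z)))" using umin by blast
    also have "\<dots> \<le> energy V c f" by (rule energy_truncate[OF network_facts(3)[OF net]])
    finally show "energy V c u \<le> energy V c f" .
  qed
  with boundary range show ?thesis by (rule that)
qed

text \<open>A solution of the Dirichlet problem is harmonic off the boundary: perturbing
  it at an interior vertex z shows that no current leaves z.\<close>
lemma dirichlet_min_harmonic:
  assumes net: "network V c" and min: "dirichlet_min V c D u" and z: "z \<in> V" "z \<notin> D"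
  shows "laplacian V c u z = 0"
proof -
  note nf = network_facts[OF net]
  define h where "h y = (if y = z then 1 else (0::real))" for y
  have "dirichlet_form V c u h = 0"
  proof (rule dirichlet_form_zero_at_minimum[OF _ nf(3)])
    fix t
    show "energy V c u \<le> energy V c (\<lambda>y. u y + t * h y)"
      by (rule dirichlet_minD[OF min]) (use z in \<open>auto simp: h_def\<close>)
  qed
  moreover have "dirichlet_form V c u h = (\<Sum>y\<in>V. h y * laplacian V c u y)"
    by (rule dirichlet_form_green[OF nf(4)])
  moreover have "(\<Sum>y\<in>V. h y * laplacian V c u y) = laplacian V c u z"
  proof -
    have "(\<Sum>y\<in>V. h y * laplacian V c u y) = (\<Sum>y\<in>V. if y = z then laplacian V c u y else 0)"
      unfolding h_def by (intro sum.cong) auto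
    then show ?thesis using z nf(1) by simp
  qed
  ultimately show ?thesis by simp
qed

section \<open>Unit currents and effective resistance\<close>

definition dipole :: "'a \<Rightarrow> 'a \<Rightarrow> 'a \<Rightarrow> real" where
  "dipole a b z = (if z = a then 1 else 0) - (if z = b then 1 else 0)"

definition unit_current :: "'a set \<Rightarrow> ('a \<Rightarrow> 'a \<Rightarrow> real) \<Rightarrow> 'a \<Rightarrow> 'a \<Rightarrow> ('a \<Rightarrow> real) \<Rightarrow> bool" where
  "unit_current V c a b \<Psi> \<longleftrightarrow> (\<forall>z\<in>V. laplacian V c \<Psi> z = dipole a b z)"

lemma dirichlet_form_dipole:
  assumes net: "network V c" and p: "p \<in> V" and q: "q \<in> V"
    and lap: "\<forall>z\<in>V. laplacian V c f z = k * dipole p q z"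
  shows "dirichlet_form V c f g = k * (g p - g q)"
proof -
  have "dirichlet_form V c f g = (\<Sum>u\<in>V. g u * laplacian V c f u)"
    by (rule dirichlet_form_green[OF network_facts(4)[OF net]])
  also have "\<dots> = (\<Sum>u\<in>V. (if u = p then k * g u else 0) - (if u = q then k * g u else 0))"
    by (intro sum.cong refl) (simp add: lap[rule_format] dipole_def algebra_simps)
  also have "\<dots> = k * (g p - g q)"
    using p q network_facts(1)[OF net] by (simp add: sum_subtractf algebra_simps)
  finally show ?thesis .
qed

lemma equilibrium_potential:
  assumes net: "network V c" and a: "a \<in> V" and b: "b \<in> V" and ab: "a \<noteq> b"
  shows "\<exists>\<phi>. (\<forall>z. 0 \<le> \<phi> z \<and> \<phi> z \<le> 1) \<and> 0 < energy V c \<phi> \<and>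
     reff V c a b = 1 / energy V c \<phi> \<and>
     (\<forall>z\<in>V. laplacian V c \<phi> z = energy V c \<phi> * dipole a b z)"
proof -
  note nf = network_facts[OF net]
  have "\<forall>z\<in>{a, b}. 0 \<le> (if z = a then 1 else 0 :: real) \<and> (if z = a then 1 else 0 :: real) \<le> 1"
    by simp
  then obtain \<phi> where bd: "\<forall>z\<in>{a, b}. \<phi> z = (if z = a then 1 else 0)"
    and range: "\<forall>z. 0 \<le> \<phi> z \<and> \<phi> z \<le> 1" and min: "dirichlet_min V c {a, b} \<phi>"
    by (rule dirichlet_min_exists[OF net])
  have \<phi>a: "\<phi> a = 1" and \<phi>b: "\<phi> b = 0" using bd ab by auto
  define E where "E = energy V c \<phi>"
  have "Inf {energy V c f | f. f a = 1 \<and> f b = 0} = E"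
    unfolding E_def
  proof (rule cInf_eq_minimum)
    show "energy V c \<phi> \<in> {energy V c f | f. f a = 1 \<and> f b = 0}" using \<phi>a \<phi>b by auto
    fix y assume "y \<in> {energy V c f | f. f a = 1 \<and> f b = 0}"
    then obtain f where f: "f a = 1" "f b = 0" "y = energy V c f" by auto
    show "energy V c \<phi> \<le> y"
      unfolding f(3) by (rule dirichlet_minD[OF min]) (use f \<phi>a \<phi>b in auto)
  qed
  then have reff: "reff V c a b = 1 / E" unfolding reff_def using ab by simp
  have "E \<noteq> 0"
  proof
    assume "E = 0"
    then have "\<phi> a = \<phi> b" unfolding E_def by (rule energy_zero_imp_const[OF net _ a b])
    with \<phi>a \<phi>b show False by simp
  qed
  then have E: "0 < E" using energy_nonneg[OF nf(3), of V \<phi>] unfolding E_def by linarith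
  text \<open>Harmonic off a and b; Kirchhoff and Green's identity fix the two remaining currents.\<close>
  define La where "La = laplacian V c \<phi> a"
  define Lb where "Lb = laplacian V c \<phi> b"
  have lap: "laplacian V c \<phi> z = (if z = a then La else 0) + (if z = b then Lb else 0)"
    if "z \<in> V" for z
    using dirichlet_min_harmonic[OF net min that] ab unfolding La_def Lb_def by auto
  have "0 = (\<Sum>z\<in>V. laplacian V c \<phi> z)" by (rule laplacian_sum_zero[OF nf(4), symmetric])
  also have "\<dots> = (\<Sum>z\<in>V. (if z = a then La else 0) + (if z = b then Lb else 0))"
    using lap by (intro sum.cong) auto
  also have "\<dots> = La + Lb" using a b nf(1) by (simp add: sum.distrib)
  finally have Lb: "Lb = - La" by simp
  have "E = (\<Sum>z\<in>V. \<phi> z * laplacian V c \<phi> z)"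
    unfolding E_def energy_eq_dirichlet_form by (rule dirichlet_form_green[OF nf(4)])
  also have "\<dots> = (\<Sum>z\<in>V. if z = a then La else 0)"
    using lap \<phi>a \<phi>b ab by (intro sum.cong) auto
  also have "\<dots> = La" using a nf(1) by simp
  finally have "\<forall>z\<in>V. laplacian V c \<phi> z = E * dipole a b z"
    using lap Lb ab unfolding dipole_def by auto
  then show ?thesis using range E reff unfolding E_def by blast
qed

lemma unit_current_exists:
  assumes net: "network V c" and a: "a \<in> V" and b: "b \<in> V"
  shows "\<exists>\<Psi>. unit_current V c a b \<Psi>"
proof (cases "a = b")
  case True
  then show ?thesis
    by (intro exI[of _ "\<lambda>_. 0"]) (simp add: unit_current_def laplacian_def dipole_def)
next
  case False
  obtain \<phi> where E: "0 < energy V c \<phi>"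
    and lap: "\<forall>z\<in>V. laplacian V c \<phi> z = energy V c \<phi> * dipole a b z"
    using equilibrium_potential[OF net a b False] by blast
  have "laplacian V c (\<lambda>z. \<phi> z / energy V c \<phi>) z = laplacian V c \<phi> z / energy V c \<phi>" for z
    unfolding laplacian_def sum_divide_distrib by (intro sum.cong refl) (simp add: diff_divide_distrib[symmetric])
  then show ?thesis
    using lap E unfolding unit_current_def by (intro exI[of _ "\<lambda>z. \<phi> z / energy V c \<phi>"]) simp
qed

lemma unit_current_diff:
  "unit_current V c a r \<Psi>\<^sub>1 \<Longrightarrow> unit_current V c b r \<Psi>\<^sub>2 \<Longrightarrow>
     unit_current V c a b (\<lambda>z. \<Psi>\<^sub>1 z - \<Psi>\<^sub>2 z)"
  unfolding unit_current_def by (simp add: laplacian_diff dipole_def)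

text \<open>Potentials of unit currents are 1-Lipschitz for effective resistance: pair
  the potential with the equilibrium potential between z and w.\<close>
lemma unit_current_lipschitz:
  assumes net: "network V c" and p: "p \<in> V" and q: "q \<in> V"
    and \<Psi>: "unit_current V c p q \<Psi>" and z: "z \<in> V" and w: "w \<in> V"
  shows "\<bar>\<Psi> z - \<Psi> w\<bar> \<le> reff V c z w"
proof (cases "z = w")
  case True then show ?thesis by (simp add: reff_def)
next
  case False
  obtain \<phi> where range: "\<forall>y. 0 \<le> \<phi> y \<and> \<phi> y \<le> 1" and E: "0 < energy V c \<phi>"
    and R: "reff V c z w = 1 / energy V c \<phi>"
    and lap: "\<forall>y\<in>V. laplacian V c \<phi> y = energy V c \<phi> * dipole z w y"
    using equilibrium_potential[OF net z w False] by blast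
  have pair: "dirichlet_form V c \<Psi> g = g p - g q" for g
    using dirichlet_form_dipole[OF net p q, of \<Psi> 1] \<Psi> unfolding unit_current_def by simp
  have "energy V c \<phi> * (\<Psi> z - \<Psi> w) = dirichlet_form V c \<phi> \<Psi>"
    by (rule dirichlet_form_dipole[OF net z w lap, symmetric])
  also have "\<dots> = \<phi> p - \<phi> q"
    by (simp add: dirichlet_form_commute[of V c \<phi>] pair)
  finally have drop: "energy V c \<phi> * (\<Psi> z - \<Psi> w) = \<phi> p - \<phi> q" .
  have "\<bar>\<phi> p - \<phi> q\<bar> \<le> 1" using range[rule_format, of p] range[rule_format, of q] by auto
  then have "energy V c \<phi> * \<bar>\<Psi> z - \<Psi> w\<bar> \<le> 1" using drop E by (metis abs_mult abs_of_pos)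
  then have "\<bar>\<Psi> z - \<Psi> w\<bar> \<le> 1 / energy V c \<phi>" by (subst pos_le_divide_eq[OF E]) (simp add: mult.commute)
  then show ?thesis using R by simp
qed

text \<open>The voltage drop of a unit current bounds the effective resistance from above
  (Thomson's principle in dual form): for f with f a = 1, f b = 0 the energy of
  f - Psi/P is nonnegative, where P is the drop, whence energy f \<ge> 1/P.\<close>
lemma reff_le_voltage_drop:
  assumes net: "network V c" and a: "a \<in> V" and b: "b \<in> V" and ab: "a \<noteq> b"
    and \<Psi>: "unit_current V c a b \<Psi>"
  shows "reff V c a b \<le> \<Psi> a - \<Psi> b"
proof -
  note nf = network_facts[OF net]
  define P where "P = \<Psi> a - \<Psi> b"
  have pair: "dirichlet_form V c \<Psi> g = g a - g b" for g
    using dirichlet_form_dipole[OF net a b, of \<Psi> 1] \<Psi> unfolding unit_current_def by simp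
  have EP: "energy V c \<Psi> = P" unfolding P_def energy_eq_dirichlet_form pair ..
  have "P \<noteq> 0"
  proof
    assume "P = 0"
    then have "\<forall>v\<in>V. \<Psi> a = \<Psi> v" using energy_zero_imp_const[OF net _ a] EP by auto
    then have "laplacian V c \<Psi> a = 0" unfolding laplacian_def by simp
    with \<Psi> a ab show False unfolding unit_current_def dipole_def by auto
  qed
  then have P: "0 < P" using energy_nonneg[OF nf(3), of V \<Psi>] EP by simp
  define X where "X = {energy V c f | f. f a = 1 \<and> f b = 0}"
  have lower: "1 / P \<le> y" if "y \<in> X" for y
  proof -
    from that obtain f where f: "f a = 1" "f b = 0" and y: "y = energy V c f"
      unfolding X_def by auto
    have "0 \<le> energy V c (\<lambda>z. f z + (- 1 / P) * \<Psi> z)" by (rule energy_nonneg[OF nf(3)])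
    also have "\<dots> = energy V c f - 1 / P"
      unfolding energy_perturb dirichlet_form_commute[of V c f] pair EP
      using f P by (simp add: power2_eq_square field_simps)
    finally show ?thesis using y by simp
  qed
  have "energy V c (\<lambda>z. if z = a then 1 else 0) \<in> X" unfolding X_def using ab by auto
  then have "1 / P \<le> Inf X" by (intro cInf_greatest lower) auto
  moreover from this have "0 < Inf X" using P by (meson less_le_trans zero_less_divide_1_iff)
  ultimately have "1 / Inf X \<le> P" using P by (simp add: field_simps)
  then show ?thesis unfolding reff_def X_def P_def using ab by simp
qed

section \<open>Harmonic measure of a set and resistance to the rest of the boundary\<close>

definition harmonic_measure ::
  "'a set \<Rightarrow> ('a \<Rightarrow> 'a \<Rightarrow> real) \<Rightarrow> 'a set \<Rightarrow> 'a set \<Rightarrow> ('a \<Rightarrow> real) \<Rightarrow> bool" where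
  "harmonic_measure V c S A u \<longleftrightarrow>
     (\<forall>z\<in>S. u z = (if z \<in> A then 1 else 0)) \<and> (\<forall>z. 0 \<le> u z \<and> u z \<le> 1) \<and>
     dirichlet_min V c S u"

lemma harmonic_measure_exists:
  assumes "network V c"
  shows "\<exists>u. harmonic_measure V c S A u"
proof -
  have "\<forall>z\<in>S. 0 \<le> (if z \<in> A then 1 else 0 :: real) \<and> (if z \<in> A then 1 else 0 :: real) \<le> 1"
    by simp
  then obtain u where "\<forall>z\<in>S. u z = (if z \<in> A then 1 else 0)" "\<forall>z. 0 \<le> u z \<and> u z \<le> 1"
    "dirichlet_min V c S u"
    by (rule dirichlet_min_exists[OF assms])
  then show ?thesis unfolding harmonic_measure_def by blast
qed

lemma harmonic_measure_energy_pos: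
  assumes net: "network V c" and hm: "harmonic_measure V c S A u"
    and x: "x \<in> A" "x \<in> S" and y: "y \<in> S - A" and S: "S \<subseteq> V"
  shows "0 < energy V c u"
proof -
  have "u x \<noteq> u y" using hm x y unfolding harmonic_measure_def by auto
  then have "energy V c u \<noteq> 0" using energy_zero_imp_const[OF net] x y S by blast
  then show ?thesis using energy_nonneg[OF network_facts(3)[OF net], of V u] by linarith
qed

definition glued_lift :: "'a set \<Rightarrow> 'a set \<Rightarrow> ('a set \<Rightarrow> real) \<Rightarrow> 'a \<Rightarrow> real" where
  "glued_lift A T g z = (if z \<in> A then g A else if z \<in> T then g T else g {z})"

text \<open>Gluing A and T = S - A preserves energy: the glued vertices partition V, and
  the lifted potential is constant on each part.\<close>
lemma energy_glued:
  assumes fin: "finite V" and S: "S \<subseteq> V" and A: "A \<subseteq> S" "A \<noteq> {}"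
  shows "energy (glued_vertices V A (S - A)) (glued_cond c) g
       = energy V c (glued_lift A (S - A) g)"
proof -
  define T where "T = S - A"
  define W where "W = glued_vertices V A T"
  define f where "f = glued_lift A T g"
  have AT: "A \<noteq> T" "A \<union> T = S" using A unfolding T_def by auto
  have W: "W = {A, T} \<union> (\<lambda>x. {x}) ` (V - S)"
    unfolding W_def glued_vertices_def AT(2) by auto
  have parts: "finite W" "\<forall>P\<in>W. finite P" "\<Union>W = V"
    "\<forall>P\<in>W. \<forall>Q\<in>W. P \<noteq> Q \<longrightarrow> P \<inter> Q = {}"
    unfolding W T_def using fin S A by (auto intro: rev_finite_subset)
  have decompose: "(\<Sum>z\<in>V. h z) = (\<Sum>P\<in>W. \<Sum>z\<in>P. h z)" for h :: "'a \<Rightarrow> real"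
    using sum.Union_disjoint[OF parts(2,4)] parts(3) by simp
  have f_on_part: "f z = g P" if "P \<in> W" "z \<in> P" for P z
    using that AT unfolding W f_def glued_lift_def T_def by auto
  have "(\<Sum>u\<in>V. \<Sum>v\<in>V. c u v * (f u - f v)\<^sup>2)
      = (\<Sum>P\<in>W. \<Sum>u\<in>P. \<Sum>Q\<in>W. \<Sum>v\<in>Q. c u v * (g P - g Q)\<^sup>2)"
    unfolding decompose by (intro sum.cong refl) (simp add: f_on_part)
  also have "\<dots> = (\<Sum>P\<in>W. \<Sum>Q\<in>W. \<Sum>u\<in>P. \<Sum>v\<in>Q. c u v * (g P - g Q)\<^sup>2)"
    by (intro sum.cong refl sum.swap)
  also have "\<dots> = (\<Sum>P\<in>W. \<Sum>Q\<in>W. glued_cond c P Q * (g P - g Q)\<^sup>2)"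
    unfolding glued_cond_def by (intro sum.cong refl) (simp add: sum_distrib_right)
  finally show ?thesis unfolding energy_def W_def f_def T_def by simp
qed

text \<open>The resistance between A and the rest of the boundary is the reciprocal of the
  energy of the harmonic measure of A: admissible potentials on the glued network
  lift to admissible potentials on V, and the harmonic measure descends to one.\<close>
lemma reff_set_harmonic_measure:
  assumes net: "network V c" and S: "S \<subseteq> V" and A: "A \<subseteq> S" "A \<noteq> {}"
    and T: "S - A \<noteq> {}" and hm: "harmonic_measure V c S A u"
  shows "reff_set V c A (S - A) = 1 / energy V c u"
proof -
  define T where "T = S - A"
  define X where "X = {energy (glued_vertices V A T) (glued_cond c) g | g. g A = 1 \<and> g T = 0}"
  have AT: "A \<noteq> T" using A unfolding T_def by auto
  have u_on_S: "\<forall>z\<in>S. u z = (if z \<in> A then 1 else 0)" and min: "dirichlet_min V c S u"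
    using hm unfolding harmonic_measure_def by auto
  note glue = energy_glued[OF network_facts(1)[OF net] S A, folded T_def]
  have lower: "energy V c u \<le> y" if "y \<in> X" for y
  proof -
    from that obtain g where g: "g A = 1" "g T = 0"
      and y: "y = energy (glued_vertices V A T) (glued_cond c) g" unfolding X_def by auto
    have "energy V c u \<le> energy V c (glued_lift A T g)"
      by (rule dirichlet_minD[OF min]) (use g u_on_S in \<open>auto simp: glued_lift_def T_def\<close>)
    then show ?thesis using y glue by simp
  qed
  define g\<^sub>0 where "g\<^sub>0 P = (if P = A then 1 else if P = T then 0 else u (the_elem P))" for P
  have "glued_lift A T g\<^sub>0 z = u z" if "z \<in> V" for z
    using u_on_S AT A(1) unfolding glued_lift_def g\<^sub>0_def T_def by auto
  then have "energy V c u = energy (glued_vertices V A T) (glued_cond c) g\<^sub>0"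
    using glue energy_cong[of V "glued_lift A T g\<^sub>0" u c] by simp
  then have "energy V c u \<in> X" unfolding X_def g\<^sub>0_def using AT by auto
  then have "Inf X = energy V c u" by (rule cInf_eq_minimum[OF _ lower])
  then show ?thesis
    unfolding reff_set_def reff_def T_def[symmetric] X_def[symmetric] using AT by simp
qed

section \<open>Two facts about Laplacian-type matrices and a counting bound\<close>

lemma zero_row_sum_pairing:
  fixes F P :: "'i \<Rightarrow> 'i \<Rightarrow> real"
  assumes fin: "finite K" and sym: "\<And>i k. i \<in> K \<Longrightarrow> k \<in> K \<Longrightarrow> F i k = F k i"
    and rows: "\<And>i. i \<in> K \<Longrightarrow> (\<Sum>k\<in>K. F i k) = 0"
  shows "(\<Sum>i\<in>K. \<Sum>k\<in>K. - F i k * (P i i - P k i - P i k + P k k))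
       = 2 * (\<Sum>i\<in>K. \<Sum>k\<in>K. F i k * P i k)"
proof -
  have diag_i: "(\<Sum>i\<in>K. \<Sum>k\<in>K. F i k * P i i) = 0"
    using rows by (simp add: sum_distrib_right[symmetric])
  have transpose: "(\<Sum>i\<in>K. \<Sum>k\<in>K. F i k * Q i k) = (\<Sum>i\<in>K. \<Sum>k\<in>K. F i k * Q k i)"
    for Q :: "'i \<Rightarrow> 'i \<Rightarrow> real"
    by (subst sum.swap) (intro sum.cong refl, simp add: sym)
  have diag_k: "(\<Sum>i\<in>K. \<Sum>k\<in>K. F i k * P k k) = 0"
    using transpose[of "\<lambda>i k. P i i"] diag_i by simp
  have "(\<Sum>i\<in>K. \<Sum>k\<in>K. - F i k * (P i i - P k i - P i k + P k k))
      = (\<Sum>i\<in>K. \<Sum>k\<in>K. F i k * P k i) + (\<Sum>i\<in>K. \<Sum>k\<in>K. F i k * P i k)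
        - (\<Sum>i\<in>K. \<Sum>k\<in>K. F i k * P i i) - (\<Sum>i\<in>K. \<Sum>k\<in>K. F i k * P k k)"
    by (simp add: algebra_simps sum.distrib sum_subtractf)
  also have "\<dots> = 2 * (\<Sum>i\<in>K. \<Sum>k\<in>K. F i k * P i k)"
    using transpose[of P] diag_i diag_k by simp
  finally show ?thesis .
qed

lemma zero_row_sum_pairing_lower:
  fixes F P :: "'i \<Rightarrow> 'i \<Rightarrow> real"
  assumes fin: "finite K" and sym: "\<And>i k. i \<in> K \<Longrightarrow> k \<in> K \<Longrightarrow> F i k = F k i"
    and rows: "\<And>i. i \<in> K \<Longrightarrow> (\<Sum>k\<in>K. F i k) = 0"
    and offdiag: "\<And>i k. i \<in> K \<Longrightarrow> k \<in> K \<Longrightarrow> i \<noteq> k \<Longrightarrow> F i k \<le> 0"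
    and sep: "\<And>i k. i \<in> K \<Longrightarrow> k \<in> K \<Longrightarrow> i \<noteq> k \<Longrightarrow> \<epsilon> \<le> P i i - P k i - P i k + P k k"
  shows "\<epsilon> * (\<Sum>i\<in>K. F i i) \<le> 2 * (\<Sum>i\<in>K. \<Sum>k\<in>K. F i k * P i k)"
proof -
  have row: "(\<Sum>k\<in>K. \<epsilon> * - F i k + (if k = i then \<epsilon> * F i i else 0)) = \<epsilon> * F i i"
    if "i \<in> K" for i
    using fin that rows[OF that] by (simp add: sum_subtractf sum_distrib_left[symmetric])
  have "\<epsilon> * (\<Sum>i\<in>K. F i i)
      = (\<Sum>i\<in>K. \<Sum>k\<in>K. \<epsilon> * - F i k + (if k = i then \<epsilon> * F i i else 0))"
    unfolding sum_distrib_left by (intro sum.cong refl) (rule row[symmetric])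
  also have "\<dots> \<le> (\<Sum>i\<in>K. \<Sum>k\<in>K. - F i k * (P i i - P k i - P i k + P k k))"
  proof (intro sum_mono)
    fix i k assume ik: "i \<in> K" "k \<in> K"
    show "\<epsilon> * - F i k + (if k = i then \<epsilon> * F i i else 0)
        \<le> - F i k * (P i i - P k i - P i k + P k k)"
    proof (cases "k = i")
      case False
      have "- F i k * \<epsilon> \<le> - F i k * (P i i - P k i - P i k + P k k)"
        using offdiag[OF ik] sep[OF ik] False by (intro mult_left_mono) auto
      then show ?thesis using False by (simp add: mult.commute)
    qed simp
  qed
  also have "\<dots> = 2 * (\<Sum>i\<in>K. \<Sum>k\<in>K. F i k * P i k)"
    by (rule zero_row_sum_pairing[OF fin sym rows])
  finally show ?thesis .
qed

lemma card_small_values: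
  fixes C :: "'i \<Rightarrow> real"
  assumes fin: "finite K" and nonneg: "\<And>i. i \<in> K \<Longrightarrow> 0 \<le> C i" and t: "0 < t"
  shows "real (card K) - (\<Sum>i\<in>K. C i) / t \<le> real (card {i \<in> K. C i \<le> t})"
proof -
  define Big where "Big = {i \<in> K. \<not> C i \<le> t}"
  have "real (card Big) * t = (\<Sum>i\<in>Big. t)" by simp
  also have "\<dots> \<le> (\<Sum>i\<in>Big. C i)" by (intro sum_mono) (auto simp: Big_def)
  also have "\<dots> \<le> (\<Sum>i\<in>K. C i)" using fin nonneg by (intro sum_mono2) (auto simp: Big_def)
  finally have "real (card Big) \<le> (\<Sum>i\<in>K. C i) / t" using t by (simp add: le_divide_eq)
  moreover have "card K = card {i \<in> K. C i \<le> t} + card Big"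
    unfolding Big_def using fin by (subst card_Un_disjoint[symmetric]) (auto intro: arg_cong[where f=card])
  ultimately show ?thesis by simp
qed

section \<open>A partition of the boundary into blocks\<close>

locale block_partition =
  fixes V :: "'a set" and c :: "'a \<Rightarrow> 'a \<Rightarrow> real" and S :: "'a set"
    and B :: "'i \<Rightarrow> 'a set" and K :: "'i set"
  assumes network: "network V c" and S_sub: "S \<subseteq> V" and finite_K: "finite K"
    and block_nonempty: "\<And>i. i \<in> K \<Longrightarrow> B i \<noteq> {}"
    and block_disjoint: "\<And>i j. i \<in> K \<Longrightarrow> j \<in> K \<Longrightarrow> i \<noteq> j \<Longrightarrow> B i \<inter> B j = {}"
    and blocks_cover: "(\<Union>i\<in>K. B i) = S"
begin

definition rep :: "'i \<Rightarrow> 'a" where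
  "rep i = (SOME z. z \<in> B i)"

definition hm :: "'i \<Rightarrow> 'a \<Rightarrow> real" where
  "hm i = (SOME u. harmonic_measure V c S (B i) u)"

definition flux :: "'i \<Rightarrow> 'i \<Rightarrow> real" where
  "flux i k = (\<Sum>z\<in>B k. laplacian V c (hm i) z)"

lemmas net = network_facts[OF network]

lemma block_sub: "i \<in> K \<Longrightarrow> B i \<subseteq> S"
  using blocks_cover by blast

lemma rep_in_block: "i \<in> K \<Longrightarrow> rep i \<in> B i"
  unfolding rep_def using block_nonempty by (simp add: some_in_eq)

lemma rep_in_V: "i \<in> K \<Longrightarrow> rep i \<in> V"
  using rep_in_block block_sub S_sub by blast

lemma finite_block: "i \<in> K \<Longrightarrow> finite (B i)"
  by (rule finite_subset[OF subset_trans[OF block_sub S_sub] net(1)])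

lemma in_block_iff: "i \<in> K \<Longrightarrow> k \<in> K \<Longrightarrow> z \<in> B k \<Longrightarrow> z \<in> B i \<longleftrightarrow> k = i"
  using block_disjoint[of i k] by blast

lemma hm: "harmonic_measure V c S (B i) (hm i)"
  unfolding hm_def using harmonic_measure_exists[OF network] by (rule someI_ex)

lemma hm_on_block:
  assumes "i \<in> K" "k \<in> K" "z \<in> B k"
  shows "hm i z = (if k = i then 1 else 0)"
proof -
  have "z \<in> S" using assms block_sub by blast
  then have "hm i z = (if z \<in> B i then 1 else 0)"
    using hm[of i] unfolding harmonic_measure_def by blast
  then show ?thesis using in_block_iff[OF assms] by simp
qed

lemma hm_range: "0 \<le> hm i z" "hm i z \<le> 1"
  using hm[of i] unfolding harmonic_measure_def by auto

lemma sum_over_blocks: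
  assumes "\<And>z. z \<in> V - S \<Longrightarrow> h z = 0"
  shows "(\<Sum>z\<in>V. h z) = (\<Sum>k\<in>K. \<Sum>z\<in>B k. h z)"
proof -
  have "(\<Sum>z\<in>V. h z) = (\<Sum>z\<in>S. h z)"
    using assms S_sub net(1) by (intro sum.mono_neutral_right) auto
  also have "\<dots> = (\<Sum>k\<in>K. \<Sum>z\<in>B k. h z)"
    unfolding blocks_cover[symmetric]
    by (intro sum.UNION_disjoint) (auto simp: finite_K finite_block block_disjoint)
  finally show ?thesis .
qed

lemma hm_harmonic: "z \<in> V - S \<Longrightarrow> laplacian V c (hm i) z = 0"
  using hm[of i] unfolding harmonic_measure_def by (auto intro: dirichlet_min_harmonic[OF network])

lemma dirichlet_form_hm:
  "dirichlet_form V c (hm i) g = (\<Sum>k\<in>K. \<Sum>z\<in>B k. g z * laplacian V c (hm i) z)"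
  unfolding dirichlet_form_green[OF net(4)] by (rule sum_over_blocks) (simp add: hm_harmonic)

section \<open>The flux matrix\<close>

lemma flux_row_sum: "(\<Sum>k\<in>K. flux i k) = 0"
proof -
  have "(\<Sum>k\<in>K. flux i k) = (\<Sum>z\<in>V. laplacian V c (hm i) z)"
    unfolding flux_def by (rule sum_over_blocks[symmetric]) (rule hm_harmonic)
  then show ?thesis using laplacian_sum_zero[OF net(4)] by simp
qed

text \<open>The flux matrix is the Gram matrix of the harmonic measures; hence it is
  symmetric and has the energies on its diagonal.\<close>
lemma flux_eq_dirichlet_form: "k \<in> K \<Longrightarrow> flux i k = dirichlet_form V c (hm i) (hm k)"
proof -
  assume k: "k \<in> K"
  have block: "(\<Sum>z\<in>B k'. hm k z * laplacian V c (hm i) z) = (if k' = k then flux i k' else 0)"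
    if k': "k' \<in> K" for k'
    using hm_on_block[OF k k'] unfolding flux_def by (cases "k' = k") simp_all
  have "dirichlet_form V c (hm i) (hm k) = (\<Sum>k'\<in>K. if k' = k then flux i k' else 0)"
    unfolding dirichlet_form_hm using block by (rule sum.cong[OF refl])
  then show ?thesis using k finite_K by simp
qed

lemma flux_sym: "i \<in> K \<Longrightarrow> k \<in> K \<Longrightarrow> flux i k = flux k i"
  by (simp add: flux_eq_dirichlet_form dirichlet_form_commute)

lemma flux_diag: "i \<in> K \<Longrightarrow> flux i i = energy V c (hm i)"
  by (simp add: flux_eq_dirichlet_form energy_eq_dirichlet_form)

text \<open>Current flows out of the block where the harmonic measure attains its maximum 1
  and into the blocks where it attains its minimum 0.\<close>
lemma current_out_of_own_block: "i \<in> K \<Longrightarrow> z \<in> B i \<Longrightarrow> 0 \<le> laplacian V c (hm i) z"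
  unfolding laplacian_def using hm_on_block[of i i z] hm_range[of i] net(3)
  by (intro sum_nonneg mult_nonneg_nonneg) auto

lemma current_into_other_block:
  "i \<in> K \<Longrightarrow> k \<in> K \<Longrightarrow> k \<noteq> i \<Longrightarrow> z \<in> B k \<Longrightarrow> laplacian V c (hm i) z \<le> 0"
  unfolding laplacian_def using hm_on_block[of i k z] hm_range[of i] net(3)
  by (intro sum_nonpos mult_nonneg_nonpos) auto

lemma flux_offdiag_nonpos: "i \<in> K \<Longrightarrow> k \<in> K \<Longrightarrow> i \<noteq> k \<Longrightarrow> flux i k \<le> 0"
  unfolding flux_def using current_into_other_block by (intro sum_nonpos) auto

text \<open>The total absolute current of the i-th harmonic measure is twice its energy:
  the outflow through B i is its energy, and the inflow elsewhere balances it.\<close>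
lemma total_abs_current:
  assumes i: "i \<in> K"
  shows "(\<Sum>k\<in>K. \<Sum>z\<in>B k. \<bar>laplacian V c (hm i) z\<bar>) = 2 * energy V c (hm i)"
proof -
  have "(\<Sum>z\<in>B k. \<bar>laplacian V c (hm i) z\<bar>) = - flux i k + (if k = i then 2 * flux i i else 0)"
    if k: "k \<in> K" for k
  proof (cases "k = i")
    case True
    have "(\<Sum>z\<in>B i. \<bar>laplacian V c (hm i) z\<bar>) = (\<Sum>z\<in>B i. laplacian V c (hm i) z)"
      using current_out_of_own_block[OF i] by (intro sum.cong refl abs_of_nonneg)
    then show ?thesis using True unfolding flux_def by simp
  next
    case False
    have "(\<Sum>z\<in>B k. \<bar>laplacian V c (hm i) z\<bar>) = (\<Sum>z\<in>B k. - laplacian V c (hm i) z)"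
      using current_into_other_block[OF i k False] by (intro sum.cong refl abs_of_nonpos)
    then show ?thesis using False unfolding flux_def by (simp add: sum_negf)
  qed
  then have "(\<Sum>k\<in>K. \<Sum>z\<in>B k. \<bar>laplacian V c (hm i) z\<bar>)
      = (\<Sum>k\<in>K. - flux i k + (if k = i then 2 * flux i i else 0))"
    by (intro sum.cong) auto
  also have "\<dots> = 2 * energy V c (hm i)"
    using finite_K i flux_row_sum[of i] flux_diag[OF i] by (simp add: sum_subtractf)
  finally show ?thesis .
qed

lemma block_approximation:
  assumes i: "i \<in> K" and osc: "\<And>k z. k \<in> K \<Longrightarrow> z \<in> B k \<Longrightarrow> \<bar>g z - g (rep k)\<bar> \<le> \<delta>"
  shows "\<bar>dirichlet_form V c (hm i) g - (\<Sum>k\<in>K. flux i k * g (rep k))\<bar> \<le> 2 * \<delta> * energy V c (hm i)"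
proof -
  define J where "J z = laplacian V c (hm i) z" for z
  have flux_g: "flux i k * g (rep k) = (\<Sum>z\<in>B k. g (rep k) * J z)" for k
    unfolding flux_def J_def sum_distrib_right by (simp add: mult.commute)
  have "dirichlet_form V c (hm i) g - (\<Sum>k\<in>K. flux i k * g (rep k))
      = (\<Sum>k\<in>K. \<Sum>z\<in>B k. g z * J z) - (\<Sum>k\<in>K. \<Sum>z\<in>B k. g (rep k) * J z)"
    unfolding dirichlet_form_hm flux_g J_def ..
  also have "\<dots> = (\<Sum>k\<in>K. \<Sum>z\<in>B k. (g z - g (rep k)) * J z)"
    by (simp add: sum_subtractf left_diff_distrib)
  finally have error: "dirichlet_form V c (hm i) g - (\<Sum>k\<in>K. flux i k * g (rep k))
      = (\<Sum>k\<in>K. \<Sum>z\<in>B k. (g z - g (rep k)) * J z)" .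
  have "\<bar>\<Sum>k\<in>K. \<Sum>z\<in>B k. (g z - g (rep k)) * J z\<bar> \<le> (\<Sum>k\<in>K. \<Sum>z\<in>B k. \<delta> * \<bar>J z\<bar>)"
  proof (rule order_trans[OF sum_abs sum_mono[OF order_trans[OF sum_abs sum_mono]]])
    fix k z assume "k \<in> K" "z \<in> B k"
    then show "\<bar>(g z - g (rep k)) * J z\<bar> \<le> \<delta> * \<bar>J z\<bar>"
      unfolding abs_mult by (intro mult_right_mono osc) auto
  qed
  also have "\<dots> = 2 * \<delta> * energy V c (hm i)"
    using total_abs_current[OF i] unfolding J_def by (simp add: sum_distrib_left[symmetric])
  finally show ?thesis unfolding error .
qed

end

context block_partition
begin

lemma reff_set_block:
  assumes i: "i \<in> K" and k: "k \<in> K" "k \<noteq> i"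
  shows "0 < energy V c (hm i)" "reff_set V c (B i) (S - B i) = 1 / energy V c (hm i)"
proof -
  have other: "rep k \<in> S - B i" using rep_in_block[OF k(1)] block_sub[OF k(1)] in_block_iff[OF i k(1)] k(2)
    by auto
  show "0 < energy V c (hm i)"
    by (rule harmonic_measure_energy_pos[OF network hm rep_in_block[OF i] _ other S_sub])
      (use rep_in_block[OF i] block_sub[OF i] in auto)
  show "reff_set V c (B i) (S - B i) = 1 / energy V c (hm i)"
    using other by (intro reff_set_harmonic_measure[OF network S_sub block_sub[OF i]
        block_nonempty[OF i] _ hm]) auto
qed

text \<open>Let Psi i be the potential of a unit current from the
  representative of block i to a fixed vertex r.  Pairing Psi i with the i-th
  harmonic measure gives at most 1, and by the block approximation this pairing is
  the flux matrix applied to the values of Psi i at representatives, up to an error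
  2 \<delta> energy.  On the other hand, the second differences of these values are voltage
  drops of unit currents between representatives, hence at least \<epsilon>; so the pairing
  controls \<epsilon> times the total energy.\<close>
lemma total_energy_bound:
  assumes within: "\<And>k z w. k \<in> K \<Longrightarrow> z \<in> B k \<Longrightarrow> w \<in> B k \<Longrightarrow> reff V c z w \<le> \<delta>"
    and across: "\<And>i k z w. i \<in> K \<Longrightarrow> k \<in> K \<Longrightarrow> i \<noteq> k \<Longrightarrow> z \<in> B i \<Longrightarrow> w \<in> B k \<Longrightarrow>
        \<epsilon> \<le> reff V c z w"
  shows "(\<epsilon> - 4 * \<delta>) * (\<Sum>i\<in>K. energy V c (hm i)) \<le> 2 * real (card K)"
proof -
  obtain r where r: "r \<in> V" using net(2) by blast
  define \<Psi> where "\<Psi> i = (SOME \<Psi>. unit_current V c (rep i) r \<Psi>)" for i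
  have \<Psi>: "unit_current V c (rep i) r (\<Psi> i)" if "i \<in> K" for i
    unfolding \<Psi>_def using unit_current_exists[OF network rep_in_V[OF that] r] by (rule someI_ex)
  define P where "P i k = \<Psi> i (rep k)" for i k
  have upper: "(\<Sum>k\<in>K. flux i k * P i k) \<le> 1 + 2 * \<delta> * energy V c (hm i)" if i: "i \<in> K" for i
  proof -
    have osc: "\<bar>\<Psi> i z - \<Psi> i (rep k)\<bar> \<le> \<delta>" if "k \<in> K" "z \<in> B k" for k z
      using unit_current_lipschitz[OF network rep_in_V[OF i] r \<Psi>[OF i]] within[of k z "rep k"]
        that rep_in_block[of k] rep_in_V[of k] block_sub[of k] S_sub by force
    have "dirichlet_form V c (hm i) (\<Psi> i) = hm i (rep i) - hm i r"
      using dirichlet_form_dipole[OF network rep_in_V[OF i] r, of "\<Psi> i" 1] \<Psi>[OF i]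
      unfolding unit_current_def by (simp add: dirichlet_form_commute[of V c "hm i"])
    also have "\<dots> \<le> 1" using hm_on_block[OF i i rep_in_block[OF i]] hm_range[of i r] by simp
    finally show ?thesis
      using block_approximation[where g="\<Psi> i", OF i osc] unfolding P_def by (simp add: abs_le_iff)
  qed
  have separation: "\<epsilon> \<le> P i i - P k i - P i k + P k k" if ik: "i \<in> K" "k \<in> K" "i \<noteq> k" for i k
  proof -
    have "rep i \<noteq> rep k" using in_block_iff[OF ik(2,1) rep_in_block[OF ik(1)]] rep_in_block ik by auto
    from reff_le_voltage_drop[OF network rep_in_V[OF ik(1)] rep_in_V[OF ik(2)] this
        unit_current_diff[OF \<Psi>[OF ik(1)] \<Psi>[OF ik(2)]]]
    have "reff V c (rep i) (rep k) \<le> P i i - P k i - (P i k - P k k)" unfolding P_def by simp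
    moreover have "\<epsilon> \<le> reff V c (rep i) (rep k)" by (rule across[OF ik rep_in_block[OF ik(1)] rep_in_block[OF ik(2)]])
    ultimately show ?thesis by simp
  qed
  have "\<epsilon> * (\<Sum>i\<in>K. flux i i) \<le> 2 * (\<Sum>i\<in>K. \<Sum>k\<in>K. flux i k * P i k)"
    by (rule zero_row_sum_pairing_lower[OF finite_K flux_sym flux_row_sum flux_offdiag_nonpos
        separation])
  also have "\<dots> \<le> 2 * (\<Sum>i\<in>K. 1 + 2 * \<delta> * energy V c (hm i))"
    using upper by (simp add: sum_mono)
  also have "\<dots> = 2 * real (card K) + 4 * \<delta> * (\<Sum>i\<in>K. energy V c (hm i))"
    by (simp add: sum.distrib sum_distrib_left mult.assoc)
  finally show ?thesis using flux_diag by (simp add: left_diff_distrib)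
qed

end

theorem mainTheorem13:
  fixes V :: "'a set" and c :: "'a \<Rightarrow> 'a \<Rightarrow> real" and \<epsilon> :: real
    and S :: "'a set" and B :: "nat \<Rightarrow> 'a set" and m :: nat
  assumes "network V c"
    and "\<epsilon> > 0"
    and "S \<subseteq> V"
    and "m \<ge> 2"
    and "\<forall>i\<in>{1..m}. B i \<noteq> {}"
    and "\<forall>i\<in>{1..m}. \<forall>j\<in>{1..m}. i \<noteq> j \<longrightarrow> B i \<inter> B j = {}"
    and "(\<Union>i\<in>{1..m}. B i) = S"
    and "\<forall>i\<in>{1..m}. \<forall>x\<in>B i. \<forall>y\<in>B i. reff V c x y \<le> \<epsilon> / 48"
    and "\<forall>i\<in>{1..m}. \<forall>j\<in>{1..m}. i \<noteq> j \<longrightarrow>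
           (\<forall>x\<in>B i. \<forall>y\<in>B j. reff V c x y \<ge> \<epsilon>)"
  shows "\<exists>I \<subseteq> {1..m}. real (card I) \<ge> real m / 2 \<and>
           (\<forall>i\<in>I. reff_set V c (B i) (S - B i) \<ge> \<epsilon> / 24)"
proof -
  interpret block_partition V c S B "{1..m}"
    using assms(1,3,5-7) by unfold_locales auto
  define E where "E i = energy V c (hm i)" for i
  define I where "I = {i \<in> {1..m}. E i \<le> 24 / \<epsilon>}"
  have "(\<epsilon> - 4 * (\<epsilon> / 48)) * (\<Sum>i\<in>{1..m}. E i) \<le> 2 * real (card {1..m})"
    unfolding E_def by (rule total_energy_bound) (use assms(8,9) in auto)
  then have "(\<Sum>i\<in>{1..m}. E i) / (24 / \<epsilon>) \<le> real m / 11"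
    using assms(2) by (simp add: field_simps)
  then have "real m / 2 \<le> real (card I)"
    using card_small_values[of "{1..m}" E "24 / \<epsilon>"] energy_nonneg[OF net(3)] assms(2)
    unfolding I_def E_def by simp
  moreover have "\<epsilon> / 24 \<le> reff_set V c (B i) (S - B i)" if "i \<in> I" for i
  proof -
    have i: "i \<in> {1..m}" and small: "E i \<le> 24 / \<epsilon>" using that unfolding I_def by auto
    define k where "k = (if i = 1 then 2 else 1 :: nat)"
    have k: "k \<in> {1..m}" "k \<noteq> i" using assms(4) unfolding k_def by auto
    have "0 < E i" unfolding E_def by (rule reff_set_block(1)[OF i k])
    have "\<epsilon> / 24 = 1 / (24 / \<epsilon>)" by simp
    also have "\<dots> \<le> 1 / E i"
      using small assms(2) \<open>0 < E i\<close> by (intro divide_left_mono mult_pos_pos) simp_all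
    also have "\<dots> = reff_set V c (B i) (S - B i)"
      unfolding E_def by (rule reff_set_block(2)[OF i k, symmetric])
    finally show ?thesis .
  qed
  moreover have "I \<subseteq> {1..m}" unfolding I_def by blast
  ultimately show ?thesis by (intro exI[of _ I]) blast
qed

end
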